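(* For all $p,q\ge1$ and every set $X$, the free Burnside monoid $B^I_X(p,q)$ is isomorphic (as an $X$-monoid) to $\mathrm{Rh}_X(B^I_X(p,q))$.
   Context: $B_X(p,q)$ is the free semigroup on $X$ in the variety defined by $x^{p+q}=x^p$, i.e. presented by $\langle X\mid u^{p+q}=u^p\ (u\in X^+)\rangle$; $B^I_X(p,q)$ is obtained by adjoining a new identity $I$, regarded as an $X$-monoid via $X\subseteq B_X(p,q)$. For a monoid $N$ generated by $X$, the Rhodes expansion $\mathrm{Rh}(N)$ is the monoid of finite chains $(n_k<_{\mathcal L}\cdots<_{\mathcal L}n_0=1)$ with product $\sigma\tau=\mathrm{lm}(n_km\le_{\mathcal L}\cdots\le_{\mathcal L}n_1m\le_{\mathcal L}\tau)$ ($m$ the leftmost term of $\tau$, $\mathrm{lm}$ keeping the leftmost element of each block of $\mathcal L$-equivalent terms), and $\mathrm{Rh}_X(N)$ is its submonoid generated by the chains $(x<_{\mathcal L}1)$, $x\in X$; the canonical morphism to $N$ sends a chain to its leftmost term. *)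

theory Defs
  imports "HOL-Algebra.Group"
begin

text \<open>The monoid congruence on words over X generated by u^(p+q) = u^p, u a nonempty word.
  The empty word represents the adjoined identity I.\<close>
inductive burn_eq :: "'x set \<Rightarrow> nat \<Rightarrow> nat \<Rightarrow> 'x list \<Rightarrow> 'x list \<Rightarrow> bool"
  for X :: "'x set" and p q :: nat where
  brefl: "w \<in> lists X \<Longrightarrow> burn_eq X p q w w"
| bsym: "burn_eq X p q v w \<Longrightarrow> burn_eq X p q w v"
| btrans: "burn_eq X p q u v \<Longrightarrow> burn_eq X p q v w \<Longrightarrow> burn_eq X p q u w"
| brel: "u \<in> lists X \<Longrightarrow> u \<noteq> [] \<Longrightarrow> a \<in> lists X \<Longrightarrow> b \<in> lists X \<Longrightarrow>
     burn_eq X p q (a @ concat (replicate (p + q) u) @ b) (a @ concat (replicate p u) @ b)"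

definition bclass :: "'x set \<Rightarrow> nat \<Rightarrow> nat \<Rightarrow> 'x list \<Rightarrow> 'x list set" where
  "bclass X p q w = {v. burn_eq X p q w v}"

definition BI :: "'x set \<Rightarrow> nat \<Rightarrow> nat \<Rightarrow> 'x list set monoid" where
  "BI X p q = \<lparr> carrier = bclass X p q ` lists X,
      mult = (\<lambda>A B. {w. \<exists>a\<in>A. \<exists>b\<in>B. burn_eq X p q (a @ b) w}),
      one = bclass X p q [] \<rparr>"

definition bgen :: "'x set \<Rightarrow> nat \<Rightarrow> nat \<Rightarrow> 'x \<Rightarrow> 'x list set" where
  "bgen X p q x = bclass X p q [x]"

definition L_le :: "('a, 'b) monoid_scheme \<Rightarrow> 'a \<Rightarrow> 'a \<Rightarrow> bool" where
  "L_le M a b \<longleftrightarrow> (\<exists>c\<in>carrier M. a = c \<otimes>\<^bsub>M\<^esub> b)"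

definition L_less :: "('a, 'b) monoid_scheme \<Rightarrow> 'a \<Rightarrow> 'a \<Rightarrow> bool" where
  "L_less M a b \<longleftrightarrow> L_le M a b \<and> \<not> L_le M b a"

definition L_equiv :: "('a, 'b) monoid_scheme \<Rightarrow> 'a \<Rightarrow> 'a \<Rightarrow> bool" where
  "L_equiv M a b \<longleftrightarrow> L_le M a b \<and> L_le M b a"

text \<open>A chain (n_k <_L ... <_L n_0 = 1) is the list [n_k, ..., n_0] (leftmost term first).\<close>
definition rh_chain :: "('a, 'b) monoid_scheme \<Rightarrow> 'a list \<Rightarrow> bool" where
  "rh_chain M cs \<longleftrightarrow> cs \<noteq> [] \<and> set cs \<subseteq> carrier M \<and> last cs = \<one>\<^bsub>M\<^esub>
      \<and> successively (L_less M) cs"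

fun lm :: "('a, 'b) monoid_scheme \<Rightarrow> 'a list \<Rightarrow> 'a list" where
  "lm M [] = []"
| "lm M [x] = [x]"
| "lm M (x # y # zs) = (if L_equiv M x y then lm M (x # zs) else x # lm M (y # zs))"

definition rh_mult :: "('a, 'b) monoid_scheme \<Rightarrow> 'a list \<Rightarrow> 'a list \<Rightarrow> 'a list" where
  "rh_mult M \<sigma> \<tau> = lm M (map (\<lambda>n. n \<otimes>\<^bsub>M\<^esub> hd \<tau>) (butlast \<sigma>) @ \<tau>)"

definition Rh :: "('a, 'b) monoid_scheme \<Rightarrow> 'a list monoid" where
  "Rh M = \<lparr> carrier = {cs. rh_chain M cs}, mult = rh_mult M, one = [\<one>\<^bsub>M\<^esub>] \<rparr>"

inductive_set rh_gen_set :: "('a, 'b) monoid_scheme \<Rightarrow> 'x set \<Rightarrow> ('x \<Rightarrow> 'a) \<Rightarrow> 'a list set"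
  for M X g where
  rg_one: "[\<one>\<^bsub>M\<^esub>] \<in> rh_gen_set M X g"
| rg_gen: "x \<in> X \<Longrightarrow> [g x, \<one>\<^bsub>M\<^esub>] \<in> rh_gen_set M X g"
| rg_mult: "\<sigma> \<in> rh_gen_set M X g \<Longrightarrow> \<tau> \<in> rh_gen_set M X g \<Longrightarrow> rh_mult M \<sigma> \<tau> \<in> rh_gen_set M X g"

definition RhX :: "('a, 'b) monoid_scheme \<Rightarrow> 'x set \<Rightarrow> ('x \<Rightarrow> 'a) \<Rightarrow> 'a list monoid" where
  "RhX M X g = (Rh M) \<lparr> carrier := rh_gen_set M X g \<rparr>"

end

theory Submission
  imports Defs
begin

(* Send a word w over X to its suffix chain: the list of Burnside classes of all
   suffixes of w, longest first, with each block of L-equivalent consecutive classes collapsed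
   to its first element by lm.  Since w = t s makes [s] an L-upper bound of [w], this is a chain
   ending in the class of the empty word, i.e. an element of Rh(B^I_X(p,q)).

   With these, the suffix chain is shown to be a monoid morphism from
   words into Rh (suffix_chain_append), to identify the two sides of every defining relation
   u^(p+q) = u^p (suffix_chain_relation), to have the class of w as leftmost term, and to send a
   letter x to the generator (x <_L 1).  Hence it descends to B^I_X(p,q) as an injective
   morphism whose image is exactly Rh_X, which is the theorem.  Only p >= 1 is used: it
   guarantees that the class of a nonempty word is never L-equivalent to the identity
   (for q = 0 the defining relations are trivial). *)

section \<open>The L-preorder of a monoid\<close>

lemma L_le_refl: "monoid M \<Longrightarrow> a \<in> carrier M \<Longrightarrow> L_le M a a"
  unfolding L_le_def by (metis monoid.l_one monoid.one_closed)

lemma L_le_trans: "monoid M \<Longrightarrow> a \<in> carrier M \<Longrightarrow> b \<in> carrier M \<Longrightarrow> c \<in> carrier M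
  \<Longrightarrow> L_le M a b \<Longrightarrow> L_le M b c \<Longrightarrow> L_le M a c"
  unfolding L_le_def by (metis monoid.m_assoc monoid.m_closed)

lemma L_equiv_refl: "monoid M \<Longrightarrow> a \<in> carrier M \<Longrightarrow> L_equiv M a a"
  by (simp add: L_equiv_def L_le_refl)

lemma L_equiv_trans: "monoid M \<Longrightarrow> a \<in> carrier M \<Longrightarrow> b \<in> carrier M \<Longrightarrow> c \<in> carrier M
  \<Longrightarrow> L_equiv M a b \<Longrightarrow> L_equiv M b c \<Longrightarrow> L_equiv M a c"
  unfolding L_equiv_def by (meson L_le_trans)

lemma L_le_rmult: "monoid M \<Longrightarrow> a \<in> carrier M \<Longrightarrow> b \<in> carrier M \<Longrightarrow> m \<in> carrier M
  \<Longrightarrow> L_le M a b \<Longrightarrow> L_le M (a \<otimes>\<^bsub>M\<^esub> m) (b \<otimes>\<^bsub>M\<^esub> m)"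
  unfolding L_le_def by (metis monoid.m_assoc)

lemma L_equiv_rmult: "monoid M \<Longrightarrow> a \<in> carrier M \<Longrightarrow> b \<in> carrier M \<Longrightarrow> m \<in> carrier M
  \<Longrightarrow> L_equiv M a b \<Longrightarrow> L_equiv M (a \<otimes>\<^bsub>M\<^esub> m) (b \<otimes>\<^bsub>M\<^esub> m)"
  unfolding L_equiv_def by (simp add: L_le_rmult)

section \<open>Collapsing L-blocks with lm\<close>

lemma lm_Cons: "\<exists>t. lm M (x # xs) = x # t"
  by (induction xs arbitrary: x) auto

lemma lm_absorb: "\<forall>s\<in>set S. L_equiv M z s \<Longrightarrow> lm M (z # S @ ys) = lm M (z # ys)"
  by (induction S) auto

lemma lm_drop_equiv:
  assumes "monoid M" "z \<in> carrier M" "y \<in> carrier M" "w \<in> carrier M" "L_equiv M y w"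
  shows "lm M (z # y # w # r) = lm M (z # y # r)"
proof (cases "L_equiv M z y")
  case True
  then have "L_equiv M z w" using assms L_equiv_trans by metis
  then show ?thesis using True by simp
qed (use assms in simp)

text \<open>lm keeps a term exactly when it is not L-equivalent to the last term kept; hence a final
  term L-inequivalent to all others survives.\<close>
lemma lm_snoc: "\<forall>y\<in>set (x # xs). \<not> L_equiv M y e \<Longrightarrow> lm M (x # xs @ [e]) = lm M (x # xs) @ [e]"
  by (induction xs arbitrary: x) auto

text \<open>Maps on a monoid that preserve L-equivalence, such as right translations.  Through
  such a map, collapsing a sublist first does not change the final result of lm.\<close>
locale L_equiv_map =
  fixes M :: "('a, 'b) monoid_scheme" and f :: "'a \<Rightarrow> 'a"
  assumes monoid: "monoid M"
    and closed: "\<And>a. a \<in> carrier M \<Longrightarrow> f a \<in> carrier M"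
    and preserves: "\<And>a b. a \<in> carrier M \<Longrightarrow> b \<in> carrier M \<Longrightarrow> L_equiv M a b
      \<Longrightarrow> L_equiv M (f a) (f b)"
begin

text \<open>The statement behind a fixed head z, in the form needed for induction.\<close>
lemma lm_map_lm_Cons:
  "set (y # zs) \<subseteq> carrier M \<Longrightarrow> z \<in> carrier M \<Longrightarrow>
   lm M (z # map f (lm M (y # zs)) @ ys) = lm M (z # map f (y # zs) @ ys)"
proof (induction zs arbitrary: y z)
  case (Cons w zs)
  show ?case
  proof (cases "L_equiv M y w")
    case True
    then have "lm M (z # map f (lm M (y # w # zs)) @ ys) = lm M (z # map f (y # zs) @ ys)"
      using Cons by simp
    also have "\<dots> = lm M (z # map f (y # w # zs) @ ys)"
      using lm_drop_equiv[OF monoid, of z "f y" "f w"] Cons.prems closed preserves True by simp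
    finally show ?thesis .
  next
    case False
    then show ?thesis using Cons closed by (cases "L_equiv M z (f y)") simp_all
  qed
qed simp

lemma lm_map_lm_prefix:
  "set xs \<subseteq> carrier M \<Longrightarrow> set ps \<subseteq> carrier M \<Longrightarrow> z \<in> carrier M \<Longrightarrow>
   lm M (z # ps @ map f (lm M xs) @ ys) = lm M (z # ps @ map f xs @ ys)"
proof (induction ps arbitrary: z)
  case Nil
  then show ?case using lm_map_lm_Cons by (cases xs) simp_all
next
  case (Cons w ps)
  then show ?case by (cases "L_equiv M z w") simp_all
qed

lemma lm_map_lm:
  assumes "set xs \<subseteq> carrier M"
  shows "lm M (map f (lm M xs) @ ys) = lm M (map f xs @ ys)"
proof (cases xs)
  case (Cons y r)
  obtain t where t: "lm M (y # r) = y # t" using lm_Cons[of M y r] by blast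
  have fy: "f y \<in> carrier M" using assms Cons closed by simp
  have "lm M (f y # map f (lm M (y # r)) @ ys) = lm M (f y # map f (y # r) @ ys)"
    using lm_map_lm_Cons[of y r "f y" ys] assms Cons fy by simp
  then show ?thesis using t L_equiv_refl[OF monoid fy] Cons by simp
qed simp

end

lemma L_equiv_map_id: "monoid M \<Longrightarrow> L_equiv_map M id"
  by (simp add: L_equiv_map_def)

lemma L_equiv_map_rmult: "monoid M \<Longrightarrow> m \<in> carrier M \<Longrightarrow> L_equiv_map M (\<lambda>n. n \<otimes>\<^bsub>M\<^esub> m)"
  by (auto simp: L_equiv_map_def intro: monoid.m_closed L_equiv_rmult)

lemma lm_idem: "monoid M \<Longrightarrow> set xs \<subseteq> carrier M \<Longrightarrow> lm M (lm M xs) = lm M xs"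
  using L_equiv_map.lm_map_lm[OF L_equiv_map_id, of M xs "[]"] by simp

lemma lm_append_lm: "monoid M \<Longrightarrow> set ys \<subseteq> carrier M \<Longrightarrow> set xs \<subseteq> carrier M \<Longrightarrow>
  lm M (xs @ lm M ys) = lm M (xs @ ys)"
  using L_equiv_map.lm_map_lm_prefix[OF L_equiv_map_id, of M ys _ _ "[]"]
  by (cases xs) (simp_all add: lm_idem)

section \<open>The Burnside congruence\<close>

context
  fixes X :: "'x set" and p q :: nat
begin

lemma burn_eq_lists: "burn_eq X p q u v \<Longrightarrow> u \<in> lists X \<and> v \<in> lists X"
  by (induction rule: burn_eq.induct) auto

lemma burn_eq_congl: "burn_eq X p q u v \<Longrightarrow> c \<in> lists X \<Longrightarrow> burn_eq X p q (c @ u) (c @ v)"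
proof (induction rule: burn_eq.induct)
  case (brel u a b)
  then show ?case using burn_eq.brel[where X=X and p=p and q=q and u=u and a="c @ a" and b=b] by simp
next
  case (brefl w)
  then show ?case by (intro burn_eq.brefl) simp
qed (auto intro: burn_eq.intros)

lemma burn_eq_congr: "burn_eq X p q u v \<Longrightarrow> d \<in> lists X \<Longrightarrow> burn_eq X p q (u @ d) (v @ d)"
proof (induction rule: burn_eq.induct)
  case (brel u a b)
  then show ?case using burn_eq.brel[where X=X and p=p and q=q and u=u and a=a and b="b @ d"] by simp
next
  case (brefl w)
  then show ?case by (intro burn_eq.brefl) simp
qed (auto intro: burn_eq.intros)

lemma burn_eq_append: "burn_eq X p q u v \<Longrightarrow> burn_eq X p q u' v' \<Longrightarrow> burn_eq X p q (u @ u') (v @ v')"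
  by (meson burn_eq.btrans burn_eq_congl burn_eq_congr burn_eq_lists)

lemma bclass_eq_iff: "u \<in> lists X \<Longrightarrow> bclass X p q u = bclass X p q v \<longleftrightarrow> burn_eq X p q u v"
  unfolding bclass_def by (auto intro: burn_eq.intros)

lemma bclass_eqI: "burn_eq X p q u v \<Longrightarrow> bclass X p q u = bclass X p q v"
  using bclass_eq_iff burn_eq_lists by blast

lemma BI_mult_bclass: "a \<in> lists X \<Longrightarrow> b \<in> lists X \<Longrightarrow>
  bclass X p q a \<otimes>\<^bsub>BI X p q\<^esub> bclass X p q b = bclass X p q (a @ b)"
  unfolding BI_def bclass_def by (auto intro: burn_eq.intros burn_eq_append)

lemma BI_carrier: "carrier (BI X p q) = bclass X p q ` lists X"
  by (simp add: BI_def)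

lemma BI_one: "\<one>\<^bsub>BI X p q\<^esub> = bclass X p q []"
  by (simp add: BI_def)

lemma BI_monoid: "monoid (BI X p q)"
proof
  fix x y assume "x \<in> carrier (BI X p q)" "y \<in> carrier (BI X p q)"
  then obtain a b where "a \<in> lists X" "b \<in> lists X" "x = bclass X p q a" "y = bclass X p q b"
    by (auto simp: BI_carrier)
  then show "x \<otimes>\<^bsub>BI X p q\<^esub> y \<in> carrier (BI X p q)"
    by (simp add: BI_carrier BI_mult_bclass)
next
  fix x y z assume "x \<in> carrier (BI X p q)" "y \<in> carrier (BI X p q)" "z \<in> carrier (BI X p q)"
  then obtain a b c where "a \<in> lists X" "b \<in> lists X" "c \<in> lists X"
    "x = bclass X p q a" "y = bclass X p q b" "z = bclass X p q c"
    by (auto simp: BI_carrier)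
  then show "x \<otimes>\<^bsub>BI X p q\<^esub> y \<otimes>\<^bsub>BI X p q\<^esub> z = x \<otimes>\<^bsub>BI X p q\<^esub> (y \<otimes>\<^bsub>BI X p q\<^esub> z)"
    by (simp add: BI_mult_bclass)
next
  fix x assume "x \<in> carrier (BI X p q)"
  then obtain a where "a \<in> lists X" "x = bclass X p q a" by (auto simp: BI_carrier)
  then show "\<one>\<^bsub>BI X p q\<^esub> \<otimes>\<^bsub>BI X p q\<^esub> x = x" "x \<otimes>\<^bsub>BI X p q\<^esub> \<one>\<^bsub>BI X p q\<^esub> = x"
    using BI_mult_bclass[of a "[]"] BI_mult_bclass[of "[]" a] by (simp_all add: BI_one)
qed (auto simp: BI_carrier BI_one)

lemma burn_eq_Nil: "burn_eq X p q u v \<Longrightarrow> 1 \<le> p \<Longrightarrow> (u = []) = (v = [])"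
  by (induction rule: burn_eq.induct) auto

end

fun sufs :: "'a list \<Rightarrow> 'a list list" where
  "sufs [] = [[]]"
| "sufs (x # w) = (x # w) # sufs w"

fun sufs_ne :: "'a list \<Rightarrow> 'a list list" where
  "sufs_ne [] = []"
| "sufs_ne (x # w) = (x # w) # sufs_ne w"

lemma sufs_eq_sufs_ne: "sufs w = sufs_ne w @ [[]]"
  by (induction w) auto

lemma sufs_append: "sufs (a @ b) = map (\<lambda>s. s @ b) (sufs_ne a) @ sufs b"
  by (induction a) auto

lemma sufs_hd: "sufs w = w # tl (sufs w)"
  by (cases w) auto

lemma sufs_ne_suffix: "s \<in> set (sufs_ne w) \<Longrightarrow> \<exists>t. w = t @ s"
  by (induction w) (auto simp: Cons_eq_append_conv)

lemma sufs_ne_nonempty: "s \<in> set (sufs_ne w) \<Longrightarrow> s \<noteq> []"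
  by (induction w) auto

lemma sufs_suffix: "s \<in> set (sufs w) \<Longrightarrow> \<exists>t. w = t @ s"
  by (induction w) (auto simp: Cons_eq_append_conv)

section \<open>The suffix chain of a word\<close>

context
  fixes X :: "'x set" and p q :: nat
begin

abbreviation (input) "cls \<equiv> bclass X p q"
abbreviation (input) "B \<equiv> BI X p q"

definition suffix_chain :: "'x list \<Rightarrow> 'x list set list" where
  "suffix_chain w = lm B (map cls (sufs w))"

lemma cls_carrier: "w \<in> lists X \<Longrightarrow> cls w \<in> carrier B"
  by (simp add: BI_carrier)

lemma sufs_carrier: "w \<in> lists X \<Longrightarrow> set (map cls (sufs w)) \<subseteq> carrier B"
  using sufs_suffix by (fastforce simp: BI_carrier)

lemma sufs_ne_carrier: "w \<in> lists X \<Longrightarrow> set (map cls (sufs_ne w)) \<subseteq> carrier B"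
  using sufs_ne_suffix by (fastforce simp: BI_carrier)

lemma suffix_chain_hd: "hd (suffix_chain w) = cls w"
proof -
  obtain t where "lm B (cls w # map cls (tl (sufs w))) = cls w # t" using lm_Cons[of B] by blast
  then show ?thesis unfolding suffix_chain_def by (subst sufs_hd) simp
qed

lemma cls_absorbed_suffix:
  assumes "t \<in> lists X" "s \<in> lists X" "r \<in> lists X" and eq: "cls (t @ s @ r) = cls r"
  shows "L_equiv B (cls r) (cls (s @ r))"
proof -
  have "cls (s @ r) = cls s \<otimes>\<^bsub>B\<^esub> cls r" using BI_mult_bclass assms by metis
  then have "L_le B (cls (s @ r)) (cls r)" unfolding L_le_def using cls_carrier assms by blast
  moreover have "cls r = cls t \<otimes>\<^bsub>B\<^esub> cls (s @ r)"
    using eq BI_mult_bclass assms by (metis append_in_lists_conv)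
  then have "L_le B (cls r) (cls (s @ r))" unfolding L_le_def using cls_carrier assms by blast
  ultimately show ?thesis by (simp add: L_equiv_def)
qed

text \<open>The two sides of a defining relation have the same suffix chain: the suffixes of the
  extra factor u^q in front of u^p b are all L-equivalent to u^p b and collapse into it.\<close>
lemma suffix_chain_relation:
  assumes U: "U \<in> lists X" "U \<noteq> []" and b: "b \<in> lists X"
  shows "suffix_chain (concat (replicate (p + q) U) @ b) = suffix_chain (concat (replicate p U) @ b)"
proof (cases "q = 0")
  case False
  define V where "V = concat (replicate q U)"
  define R where "R = concat (replicate p U) @ b"
  have VR: "concat (replicate (p + q) U) @ b = V @ R"
    unfolding V_def R_def by (simp add: replicate_add[of q p, simplified add.commute[of q p]])
  have Vl: "V \<in> lists X" and Rl: "R \<in> lists X" using U b by (auto simp: V_def R_def)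
  have "V \<noteq> []" using U False by (cases q) (auto simp: V_def)
  then obtain x V' where V': "V = x # V'" by (cases V) auto
  have eq: "cls (V @ R) = cls R"
    using bclass_eqI[OF burn_eq.brel[OF U, of "[]" b p q]] U b VR R_def by simp
  have block: "\<forall>y\<in>set (map cls (map (\<lambda>s. s @ R) (sufs_ne V'))). L_equiv B (cls R) y"
  proof
    fix y assume "y \<in> set (map cls (map (\<lambda>s. s @ R) (sufs_ne V')))"
    then obtain s where s: "s \<in> set (sufs_ne V')" "y = cls (s @ R)" by auto
    then obtain t where t: "V' = t @ s" using sufs_ne_suffix by blast
    show "L_equiv B (cls R) y"
      using cls_absorbed_suffix[of "x # t" s R] Vl Rl eq V' t s by simp
  qed
  have "suffix_chain (V @ R)
      = lm B (cls (V @ R) # map cls (map (\<lambda>s. s @ R) (sufs_ne V')) @ map cls (sufs R))"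
    unfolding suffix_chain_def sufs_append using V' by simp
  also have "\<dots> = lm B (cls R # map cls (sufs R))"
    using lm_absorb[OF block] eq by simp
  also have "\<dots> = lm B (cls R # cls R # map cls (tl (sufs R)))"
    by (subst sufs_hd) simp
  also have "\<dots> = suffix_chain R"
    using L_equiv_refl[OF BI_monoid cls_carrier[OF Rl]]
    unfolding suffix_chain_def by (subst (2) sufs_hd) simp
  finally show ?thesis using VR R_def by simp
qed simp

context
  assumes p_pos: "1 \<le> p"
begin

lemma cls_not_L_one: "s \<in> lists X \<Longrightarrow> s \<noteq> [] \<Longrightarrow> \<not> L_equiv B (cls s) (cls [])"
proof
  assume s: "s \<in> lists X" "s \<noteq> []" and "L_equiv B (cls s) (cls [])"
  then obtain c where c: "c \<in> carrier B" "cls [] = c \<otimes>\<^bsub>B\<^esub> cls s"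
    unfolding L_equiv_def L_le_def by blast
  then obtain c' where "c' \<in> lists X" "c = cls c'" by (auto simp: BI_carrier)
  then have "burn_eq X p q [] (c' @ s)"
    using c s BI_mult_bclass bclass_eq_iff[of "[]"] by (metis lists.Nil)
  then show False using burn_eq_Nil[OF _ p_pos] s by fastforce
qed

lemma suffix_chain_eq: "w \<in> lists X \<Longrightarrow> suffix_chain w = lm B (map cls (sufs_ne w)) @ [cls []]"
proof (cases w)
  case (Cons x w')
  assume w: "w \<in> lists X"
  have "\<not> L_equiv B (cls s) (cls [])" if s: "s \<in> set (sufs_ne w)" for s
  proof -
    obtain t where "w = t @ s" using sufs_ne_suffix[OF s] by blast
    then show ?thesis using cls_not_L_one sufs_ne_nonempty[OF s] w by simp
  qed
  then show ?thesis
    using lm_snoc[of "cls w" "map cls (sufs_ne w')" B "cls []"] Cons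
    by (simp add: suffix_chain_def sufs_eq_sufs_ne)
qed (simp add: suffix_chain_def)

lemma suffix_chain_append:
  assumes a: "a \<in> lists X" and b: "b \<in> lists X"
  shows "rh_mult B (suffix_chain a) (suffix_chain b) = suffix_chain (a @ b)"
proof -
  define f where "f = (\<lambda>n. n \<otimes>\<^bsub>B\<^esub> cls b)"
  have f: "L_equiv_map B f"
    unfolding f_def using L_equiv_map_rmult[OF BI_monoid cls_carrier[OF b]] .
  have "f (cls s) = cls (s @ b)" if s: "s \<in> set (sufs_ne a)" for s
  proof -
    obtain t where "a = t @ s" using sufs_ne_suffix[OF s] by blast
    then show ?thesis unfolding f_def using a b by (simp add: BI_mult_bclass)
  qed
  then have f_sufs: "map f (map cls (sufs_ne a)) = map cls (map (\<lambda>s. s @ b) (sufs_ne a))"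
    by simp
  have f_carrier: "set (map f (map cls (sufs_ne a))) \<subseteq> carrier B"
    using L_equiv_map.closed[OF f] sufs_ne_carrier[OF a] by auto
  have "rh_mult B (suffix_chain a) (suffix_chain b)
      = lm B (map f (lm B (map cls (sufs_ne a))) @ suffix_chain b)"
    unfolding rh_mult_def f_def suffix_chain_hd using suffix_chain_eq[OF a] by simp
  also have "\<dots> = lm B (map f (map cls (sufs_ne a)) @ suffix_chain b)"
    using L_equiv_map.lm_map_lm[OF f sufs_ne_carrier[OF a]] .
  also have "\<dots> = lm B (map f (map cls (sufs_ne a)) @ map cls (sufs b))"
    unfolding suffix_chain_def by (rule lm_append_lm[OF BI_monoid sufs_carrier[OF b] f_carrier])
  also have "\<dots> = suffix_chain (a @ b)"
    unfolding f_sufs suffix_chain_def sufs_append by simp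
  finally show ?thesis .
qed

lemma suffix_chain_burn_eq: "burn_eq X p q w w' \<Longrightarrow> suffix_chain w = suffix_chain w'"
proof (induction rule: burn_eq.induct)
  case (brel u a b)
  let ?l = "concat (replicate (p + q) u) @ b" and ?r = "concat (replicate p u) @ b"
  have words: "?l \<in> lists X" "?r \<in> lists X" using brel by auto
  have "suffix_chain (a @ ?l) = rh_mult B (suffix_chain a) (suffix_chain ?l)"
    using suffix_chain_append[OF brel(3) words(1)] by simp
  also have "\<dots> = rh_mult B (suffix_chain a) (suffix_chain ?r)"
    using suffix_chain_relation brel by metis
  also have "\<dots> = suffix_chain (a @ ?r)"
    using suffix_chain_append[OF brel(3) words(2)] .
  finally show ?case .
qed auto

lemma suffix_chain_letter: "x \<in> X \<Longrightarrow> suffix_chain [x] = [bgen X p q x, \<one>\<^bsub>B\<^esub>]"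
  using cls_not_L_one[of "[x]"] by (simp add: suffix_chain_def bgen_def BI_one)

lemma suffix_chain_rh_gen: "w \<in> lists X \<Longrightarrow> suffix_chain w \<in> rh_gen_set B X (bgen X p q)"
proof (induction w)
  case Nil
  then show ?case using rh_gen_set.rg_one[of B X "bgen X p q"]
    by (simp add: suffix_chain_def BI_one)
next
  case (Cons x w)
  then have "rh_mult B (suffix_chain [x]) (suffix_chain w) \<in> rh_gen_set B X (bgen X p q)"
    using rh_gen_set.rg_mult rh_gen_set.rg_gen suffix_chain_letter by fastforce
  then show ?case using suffix_chain_append[of "[x]" w] Cons by simp
qed

lemma rh_gen_suffix_chain: "\<sigma> \<in> rh_gen_set B X (bgen X p q) \<Longrightarrow> \<exists>w\<in>lists X. \<sigma> = suffix_chain w"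
proof (induction rule: rh_gen_set.induct)
  case rg_one
  then show ?case by (intro bexI[of _ "[]"]) (simp_all add: suffix_chain_def BI_one)
next
  case (rg_gen x)
  then show ?case using suffix_chain_letter[of x] by (metis lists.Cons lists.Nil)
next
  case (rg_mult \<sigma> \<tau>)
  then show ?case using suffix_chain_append by (metis append_in_lists_conv)
qed

end

section \<open>The isomorphism\<close>

text \<open>The suffix chain, which is constant on Burnside classes, read as a map on classes.\<close>
definition rh_embed :: "'x list set \<Rightarrow> 'x list set list" where
  "rh_embed A = the_elem (suffix_chain ` A)"

lemma rh_embed_cls:
  assumes "1 \<le> p" "w \<in> lists X"
  shows "rh_embed (cls w) = suffix_chain w"
proof -
  have "w \<in> cls w" using burn_eq.brefl[OF assms(2)] by (simp add: bclass_def)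
  moreover have "suffix_chain v = suffix_chain w" if "v \<in> cls w" for v
    using suffix_chain_burn_eq[OF assms(1)] that unfolding bclass_def by (metis mem_Collect_eq)
  ultimately have "suffix_chain ` cls w = {suffix_chain w}" by blast
  then show ?thesis by (simp add: rh_embed_def)
qed

lemma rh_embed_hom:
  assumes "1 \<le> p"
  shows "rh_embed \<in> hom B (RhX B X (bgen X p q))"
proof (rule homI)
  fix A assume "A \<in> carrier B"
  then obtain w where "w \<in> lists X" "A = cls w" by (auto simp: BI_carrier)
  then show "rh_embed A \<in> carrier (RhX B X (bgen X p q))"
    using rh_embed_cls[OF assms] suffix_chain_rh_gen[OF assms] by (simp add: RhX_def Rh_def)
next
  fix A C assume "A \<in> carrier B" "C \<in> carrier B"
  then obtain a c where a: "a \<in> lists X" "A = cls a" and c: "c \<in> lists X" "C = cls c"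
    by (auto simp: BI_carrier)
  then have "rh_embed (A \<otimes>\<^bsub>B\<^esub> C) = suffix_chain (a @ c)"
    using rh_embed_cls[OF assms, of "a @ c"] by (simp add: BI_mult_bclass)
  also have "\<dots> = rh_mult B (rh_embed A) (rh_embed C)"
    using suffix_chain_append[OF assms a(1) c(1)] rh_embed_cls[OF assms] a c by simp
  finally show "rh_embed (A \<otimes>\<^bsub>B\<^esub> C) = rh_embed A \<otimes>\<^bsub>RhX B X (bgen X p q)\<^esub> rh_embed C"
    by (simp add: RhX_def Rh_def)
qed

text \<open>Injective because the leftmost term of the chain recovers the class; onto Rh_X since
  every generated chain is a suffix chain.\<close>
lemma rh_embed_iso:
  assumes "1 \<le> p"
  shows "rh_embed \<in> iso B (RhX B X (bgen X p q))"
proof -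
  have embed: "rh_embed (cls w) = suffix_chain w" if "w \<in> lists X" for w
    using rh_embed_cls[OF assms that] .
  have "inj_on rh_embed (carrier B)"
  proof (rule inj_onI)
    fix A C assume "A \<in> carrier B" "C \<in> carrier B" and eq: "rh_embed A = rh_embed C"
    then obtain a c where "a \<in> lists X" "A = cls a" "c \<in> lists X" "C = cls c"
      by (auto simp: BI_carrier)
    then show "A = C" using eq embed suffix_chain_hd by metis
  qed
  moreover have "carrier (RhX B X (bgen X p q)) \<subseteq> rh_embed ` carrier B"
  proof
    fix \<sigma> assume "\<sigma> \<in> carrier (RhX B X (bgen X p q))"
    then obtain w where w: "w \<in> lists X" "\<sigma> = suffix_chain w"
      using rh_gen_suffix_chain[OF assms] by (auto simp: RhX_def Rh_def)
    then have "\<sigma> = rh_embed (cls w)" and "cls w \<in> carrier B"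
      using embed cls_carrier by simp_all
    then show "\<sigma> \<in> rh_embed ` carrier B" by blast
  qed
  moreover have "rh_embed ` carrier B \<subseteq> carrier (RhX B X (bgen X p q))"
    using rh_embed_hom[OF assms] by (auto simp: hom_def)
  ultimately show ?thesis using rh_embed_hom[OF assms] by (auto simp: iso_def bij_betw_def)
qed

end

theorem lemma9p1:
  fixes X :: "'x set" and p q :: nat
  assumes "1 \<le> p" and "1 \<le> q"
  shows "\<exists>\<phi>. \<phi> \<in> iso (BI X p q) (RhX (BI X p q) X (bgen X p q))
           \<and> (\<forall>x\<in>X. \<phi> (bgen X p q x) = [bgen X p q x, \<one>\<^bsub>BI X p q\<^esub>])"
proof (intro exI conjI ballI)
  show "rh_embed X p q \<in> iso (BI X p q) (RhX (BI X p q) X (bgen X p q))"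
    using rh_embed_iso[OF assms(1)] .
next
  fix x assume x: "x \<in> X"
  then have x_word: "[x] \<in> lists X" by simp
  then show "rh_embed X p q (bgen X p q x) = [bgen X p q x, \<one>\<^bsub>BI X p q\<^esub>]"
    using rh_embed_cls[OF assms(1) x_word] suffix_chain_letter[OF assms(1) x] by (simp add: bgen_def)
qed

end
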